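(* Let $T>0$ and let $\alpha:[0,T]\to(0,1)$ be a continuously differentiable, decreasing function, written $t\mapsto\alpha_t$. Consider the variance preserving SDE (VPSDE) on $\mathbb{R}^D$ with coefficients ${F}_t=\frac12\frac{d\log\alpha_t}{dt}I$, ${G}_t=\sqrt{-\frac{d\log\alpha_t}{dt}}\,I$, and set $L_t=\sqrt{1-\alpha_t}\,I$ (so $L_tL_t^T=\Sigma_t=(1-\alpha_t)I$). Let $\Psi(t,s)$ be the transition matrix associated with $F$, i.e. $\frac{\partial}{\partial t}\Psi(t,s)=F_t\Psi(t,s)$, $\Psi(s,s)=I$. Let $\epsilon_\theta:\mathbb{R}^D\times[0,T]\to\mathbb{R}^D$ be any function. Then for $0\le t-\Delta t< t\le T$ the exponential-integrator update $$\hat{x}_{t-\Delta t}=\Psi(t-\Delta t,t)\hat{x}_t+\Big[\int_t^{t-\Delta t}\tfrac12\Psi(t-\Delta t,\tau)G_\tau G_\tau^TL_\tau^{-T}\,d\tau\Big]\epsilon_\theta(\hat{x}_t,t)$$ equals $$\hat{x}_{t-\Delta t}=\sqrt{\frac{\alpha_{t-\Delta t}}{\alpha_t}}\,\hat{x}_t+\Big[\sqrt{1-\alpha_{t-\Delta t}}-\sqrt{\frac{\alpha_{t-\Delta t}}{\alpha_t}}\sqrt{1-\alpha_t}\Big]\epsilon_\theta(\hat{x}_t,t),$$ which is exactly the deterministic DDIM sampling update.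
   Context: This update is the exponential-integrator discretization of the probability flow ODE $\frac{d\hat x}{dt}=F_t\hat x+\frac12 G_tG_t^TL_t^{-T}\epsilon_\theta(\hat x,t)$, where $\epsilon_\theta$ is a (noise-prediction) network, obtained by freezing $\epsilon_\theta$ at its value at time $t$ over $[t-\Delta t,t]$. The deterministic DDIM update (Song, Meng, Ermon) is the displayed second formula. *)

theory Defs
  imports "HOL-Analysis.Analysis"
begin

text \<open>VPSDE coefficients, given alpha and its derivative alpha'
  (so that d log alpha / dt = alpha' t / alpha t).\<close>

definition vp_F :: "(real \<Rightarrow> real) \<Rightarrow> (real \<Rightarrow> real) \<Rightarrow> real \<Rightarrow> real^'n^'n" where
  "vp_F \<alpha> \<alpha>' t = ((1/2) * (\<alpha>' t / \<alpha> t)) *\<^sub>R mat 1"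

definition vp_G :: "(real \<Rightarrow> real) \<Rightarrow> (real \<Rightarrow> real) \<Rightarrow> real \<Rightarrow> real^'n^'n" where
  "vp_G \<alpha> \<alpha>' t = sqrt (- (\<alpha>' t / \<alpha> t)) *\<^sub>R mat 1"

definition vp_L :: "(real \<Rightarrow> real) \<Rightarrow> real \<Rightarrow> real^'n^'n" where
  "vp_L \<alpha> t = sqrt (1 - \<alpha> t) *\<^sub>R mat 1"

end

theory Submission
  imports Defs
begin

text \<open>The drift \<open>F\<close> of the VPSDE is a scalar multiple of the identity, so the transition
  matrix is scalar too: \<open>\<Psi> r s = sqrt (\<alpha> r / \<alpha> s) I\<close>, the unique solution of a scalar linear ODE.
  With it, the integrand of the exponential integrator is \<open>sqrt (\<alpha> (t - \<Delta>t))\<close> times the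
  derivative of \<open>\<tau> \<mapsto> sqrt ((1 - \<alpha> \<tau>) / \<alpha> \<tau>)\<close>, so the fundamental theorem of calculus
  evaluates the integral in closed form, and the result is the DDIM coefficient.\<close>

lemma matrix_inv_unique:
  fixes A :: "'a::semiring_1^'n^'m" and B :: "'a^'m^'n"
  assumes AB: "A ** B = mat 1" and BA: "B ** A = mat 1"
  shows "matrix_inv A = B"
proof -
  have inverse_eq_B: "C = B" if "A ** C = mat 1 \<and> C ** A = mat 1" for C
  proof -
    have "C = C ** (A ** B)" by (simp add: AB)
    also have "\<dots> = (C ** A) ** B" by (simp add: matrix_mul_assoc)
    finally show ?thesis using that by simp
  qed
  have "A ** matrix_inv A = mat 1 \<and> matrix_inv A ** A = mat 1"
    unfolding matrix_inv_def by (rule someI[of _ B]) (simp add: AB BA)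
  then show ?thesis by (rule inverse_eq_B)
qed

lemma matrix_inv_scaleR_mat_1:
  assumes "c \<noteq> 0"
  shows "matrix_inv (c *\<^sub>R (mat 1 :: 'a::real_algebra_1^'n^'n)) = inverse c *\<^sub>R mat 1"
  using assms by (intro matrix_inv_unique) (simp_all add: matrix_scalar_ac flip: scalar_matrix_assoc)

lemma has_real_derivative_nonpos_if_antimono_on:
  assumes antimono: "antimono_on S f"
    and deriv: "(f has_real_derivative D) (at x within S)"
    and "x \<in> S" and nontrivial: "at x within S \<noteq> bot"
  shows "D \<le> 0"
proof (rule tendsto_upperbound)
  show "((\<lambda>y. (f y - f x) / (y - x)) \<longlongrightarrow> D) (at x within S)"
    using deriv by (simp add: has_field_derivative_iff)
  have "(f y - f x) / (y - x) \<le> 0" if "y \<in> S" for y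
  proof (cases y x rule: linorder_cases)
    case less
    then have "f x \<le> f y" using monotone_onD[OF antimono that \<open>x \<in> S\<close>] by simp
    with less show ?thesis by (intro divide_nonneg_neg) auto
  next
    case greater
    then have "f y \<le> f x" using monotone_onD[OF antimono \<open>x \<in> S\<close> that] by simp
    with greater show ?thesis by (intro divide_nonpos_pos) auto
  qed simp
  then show "\<forall>\<^sub>F y in at x within S. (f y - f x) / (y - x) \<le> 0"
    by (simp add: eventually_at_filter)
qed (fact nontrivial)

lemma scalar_linear_ode_solution:
  fixes X :: "real \<Rightarrow> 'a::real_normed_vector"
  assumes "convex S"
    and \<phi>_nonzero: "\<And>u. u \<in> S \<Longrightarrow> \<phi> u \<noteq> 0"
    and \<phi>_deriv: "\<And>u. u \<in> S \<Longrightarrow> (\<phi> has_real_derivative \<phi>' u) (at u within S)"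
    and X_deriv: "\<And>u. u \<in> S \<Longrightarrow> (X has_vector_derivative (\<phi>' u / \<phi> u) *\<^sub>R X u) (at u within S)"
    and "r \<in> S" "s \<in> S"
  shows "X r = (\<phi> r / \<phi> s) *\<^sub>R X s"
proof -
  have "((\<lambda>u. inverse (\<phi> u) *\<^sub>R X u) has_vector_derivative 0) (at u within S)" if "u \<in> S" for u
  proof -
    have "((\<lambda>u. inverse (\<phi> u) *\<^sub>R X u) has_vector_derivative
        inverse (\<phi> u) *\<^sub>R ((\<phi>' u / \<phi> u) *\<^sub>R X u) + (- (inverse (\<phi> u) * \<phi>' u * inverse (\<phi> u))) *\<^sub>R X u)
        (at u within S)"
      using that \<phi>_nonzero by (intro has_vector_derivative_scaleR DERIV_inverse' \<phi>_deriv X_deriv) auto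
    then show ?thesis by (simp add: field_simps)
  qed
  then obtain c where "\<And>u. u \<in> S \<Longrightarrow> inverse (\<phi> u) *\<^sub>R X u = c"
    using has_vector_derivative_zero_constant[OF \<open>convex S\<close>] by blast
  then have "inverse (\<phi> r) *\<^sub>R X r = inverse (\<phi> s) *\<^sub>R X s"
    using \<open>r \<in> S\<close> \<open>s \<in> S\<close> by simp
  then have "\<phi> r *\<^sub>R (inverse (\<phi> r) *\<^sub>R X r) = (\<phi> r / \<phi> s) *\<^sub>R X s"
    by (simp add: divide_inverse)
  then show ?thesis
    using \<phi>_nonzero[OF \<open>r \<in> S\<close>] by simp
qed

lemma vp_transition_matrix:
  fixes \<Psi> :: "real \<Rightarrow> real \<Rightarrow> real^'n^'n"
  assumes "convex S"
    and alpha_pos: "\<And>u. u \<in> S \<Longrightarrow> 0 < \<alpha> u"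
    and alpha_deriv: "\<And>u. u \<in> S \<Longrightarrow> (\<alpha> has_real_derivative \<alpha>' u) (at u within S)"
    and Psi_diag: "\<Psi> s s = mat 1"
    and Psi_ode: "\<And>u. u \<in> S \<Longrightarrow>
        ((\<lambda>r. \<Psi> r s) has_vector_derivative (vp_F \<alpha> \<alpha>' u ** \<Psi> u s)) (at u within S)"
    and r: "r \<in> S" and s: "s \<in> S"
  shows "\<Psi> r s = sqrt (\<alpha> r / \<alpha> s) *\<^sub>R mat 1"
proof -
  have sqrt_alpha_deriv: "((\<lambda>u. sqrt (\<alpha> u)) has_real_derivative \<alpha>' u / (2 * sqrt (\<alpha> u))) (at u within S)"
    if "u \<in> S" for u
    using alpha_pos[OF that] alpha_deriv[OF that] by (auto intro!: derivative_eq_intros simp: field_simps)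
  have Psi_deriv: "((\<lambda>r. \<Psi> r s) has_vector_derivative
      (\<alpha>' u / (2 * sqrt (\<alpha> u)) / sqrt (\<alpha> u)) *\<^sub>R \<Psi> u s) (at u within S)" if "u \<in> S" for u
  proof -
    have "1/2 * (\<alpha>' u / \<alpha> u) = \<alpha>' u / (2 * sqrt (\<alpha> u)) / sqrt (\<alpha> u)"
      using alpha_pos[OF that] by (simp add: field_simps flip: real_sqrt_mult)
    then have "vp_F \<alpha> \<alpha>' u ** \<Psi> u s = (\<alpha>' u / (2 * sqrt (\<alpha> u)) / sqrt (\<alpha> u)) *\<^sub>R \<Psi> u s"
      by (simp add: vp_F_def flip: scalar_matrix_assoc)
    then show ?thesis
      using Psi_ode[OF that] by simp
  qed
  have "\<Psi> r s = (sqrt (\<alpha> r) / sqrt (\<alpha> s)) *\<^sub>R \<Psi> s s"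
    by (intro scalar_linear_ode_solution[OF \<open>convex S\<close> _ sqrt_alpha_deriv Psi_deriv r s])
      (use alpha_pos in force)
  then show ?thesis
    by (simp add: Psi_diag real_sqrt_divide)
qed

lemma vp_G_transpose_matrix_inv_L:
  assumes "\<alpha>' \<tau> / \<alpha> \<tau> \<le> 0" "\<alpha> \<tau> < 1"
  shows "vp_G \<alpha> \<alpha>' \<tau> ** transpose (vp_G \<alpha> \<alpha>' \<tau>) ** matrix_inv (transpose (vp_L \<alpha> \<tau>))
    = (- \<alpha>' \<tau> / (\<alpha> \<tau> * sqrt (1 - \<alpha> \<tau>))) *\<^sub>R (mat 1 :: real^'n^'n)"
  using assms
  by (simp add: vp_G_def vp_L_def transpose_scalar matrix_inv_scaleR_mat_1 matrix_scalar_ac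
      divide_inverse flip: scalar_matrix_assoc)

lemma has_real_derivative_sqrt_noise_signal_ratio:
  assumes "0 < \<alpha> \<tau>" "\<alpha> \<tau> < 1" "(\<alpha> has_real_derivative \<alpha>' \<tau>) (at \<tau> within S)"
  shows "((\<lambda>\<tau>. sqrt ((1 - \<alpha> \<tau>) / \<alpha> \<tau>)) has_real_derivative
      - \<alpha>' \<tau> / (2 * \<alpha> \<tau> * sqrt (\<alpha> \<tau>) * sqrt (1 - \<alpha> \<tau>))) (at \<tau> within S)"
proof (rule DERIV_cong)
  show "((\<lambda>\<tau>. sqrt ((1 - \<alpha> \<tau>) / \<alpha> \<tau>)) has_real_derivative
      inverse (sqrt ((1 - \<alpha> \<tau>) / \<alpha> \<tau>)) / 2 * ((- \<alpha>' \<tau> * \<alpha> \<tau> - (1 - \<alpha> \<tau>) * \<alpha>' \<tau>) / (\<alpha> \<tau>)\<^sup>2))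
      (at \<tau> within S)"
    using assms by (auto intro!: derivative_eq_intros simp: power2_eq_square divide_less_0_iff)
  have "inverse (sqrt ((1 - \<alpha> \<tau>) / \<alpha> \<tau>)) = sqrt (\<alpha> \<tau>) / sqrt (1 - \<alpha> \<tau>)"
    by (simp add: real_sqrt_divide)
  moreover have "(- \<alpha>' \<tau> * \<alpha> \<tau> - (1 - \<alpha> \<tau>) * \<alpha>' \<tau>) / (\<alpha> \<tau>)\<^sup>2
      = - \<alpha>' \<tau> / (sqrt (\<alpha> \<tau>) * sqrt (\<alpha> \<tau>) * \<alpha> \<tau>)"
    using assms by (simp add: algebra_simps power2_eq_square)
  ultimately show "inverse (sqrt ((1 - \<alpha> \<tau>) / \<alpha> \<tau>)) / 2 * ((- \<alpha>' \<tau> * \<alpha> \<tau> - (1 - \<alpha> \<tau>) * \<alpha>' \<tau>) / (\<alpha> \<tau>)\<^sup>2)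
      = - \<alpha>' \<tau> / (2 * \<alpha> \<tau> * sqrt (\<alpha> \<tau>) * sqrt (1 - \<alpha> \<tau>))"
    using assms by (simp add: field_simps)
qed

lemma vp_exponential_integrator_integral:
  fixes \<Psi> :: "real \<Rightarrow> real \<Rightarrow> real^'n^'n"
  assumes "b \<le> t"
    and alpha_range: "\<And>\<tau>. \<tau> \<in> {b..t} \<Longrightarrow> 0 < \<alpha> \<tau> \<and> \<alpha> \<tau> < 1"
    and alpha_deriv: "\<And>\<tau>. \<tau> \<in> {b..t} \<Longrightarrow> (\<alpha> has_real_derivative \<alpha>' \<tau>) (at \<tau> within {b..t})"
    and alpha'_nonpos: "\<And>\<tau>. \<tau> \<in> {b..t} \<Longrightarrow> \<alpha>' \<tau> \<le> 0"
    and Psi: "\<And>\<tau>. \<tau> \<in> {b..t} \<Longrightarrow> \<Psi> b \<tau> = sqrt (\<alpha> b / \<alpha> \<tau>) *\<^sub>R mat 1"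
  shows "integral {b..t} (\<lambda>\<tau>. (1/2) *\<^sub>R (\<Psi> b \<tau> ** vp_G \<alpha> \<alpha>' \<tau> ** transpose (vp_G \<alpha> \<alpha>' \<tau>)
            ** matrix_inv (transpose (vp_L \<alpha> \<tau>))))
    = (sqrt (\<alpha> b) * (sqrt ((1 - \<alpha> t) / \<alpha> t) - sqrt ((1 - \<alpha> b) / \<alpha> b))) *\<^sub>R mat 1"
proof -
  define \<kappa>' where "\<kappa>' \<tau> = - \<alpha>' \<tau> / (2 * \<alpha> \<tau> * sqrt (\<alpha> \<tau>) * sqrt (1 - \<alpha> \<tau>))" for \<tau>
  have integrand: "(1/2) *\<^sub>R (\<Psi> b \<tau> ** vp_G \<alpha> \<alpha>' \<tau> ** transpose (vp_G \<alpha> \<alpha>' \<tau>)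
      ** matrix_inv (transpose (vp_L \<alpha> \<tau>))) = (sqrt (\<alpha> b) * \<kappa>' \<tau>) *\<^sub>R (mat 1 :: real^'n^'n)"
    if "\<tau> \<in> {b..t}" for \<tau>
  proof -
    have "0 < \<alpha> \<tau>" "\<alpha> \<tau> < 1" "\<alpha>' \<tau> \<le> 0"
      using alpha_range[OF that] alpha'_nonpos[OF that] by auto
    then have "vp_G \<alpha> \<alpha>' \<tau> ** transpose (vp_G \<alpha> \<alpha>' \<tau>) ** matrix_inv (transpose (vp_L \<alpha> \<tau>))
        = (- \<alpha>' \<tau> / (\<alpha> \<tau> * sqrt (1 - \<alpha> \<tau>))) *\<^sub>R (mat 1 :: real^'n^'n)"
      by (intro vp_G_transpose_matrix_inv_L) (auto simp: divide_nonpos_pos)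
    moreover have "1/2 * sqrt (\<alpha> b / \<alpha> \<tau>) * (- \<alpha>' \<tau> / (\<alpha> \<tau> * sqrt (1 - \<alpha> \<tau>))) = sqrt (\<alpha> b) * \<kappa>' \<tau>"
      using \<open>0 < \<alpha> \<tau>\<close> by (simp add: \<kappa>'_def real_sqrt_divide field_simps)
    ultimately show ?thesis
      by (simp add: Psi[OF that] matrix_mul_assoc matrix_scalar_ac flip: scalar_matrix_assoc scaleR_minus_left)
  qed
  have "((\<lambda>\<tau>. sqrt (\<alpha> b) * sqrt ((1 - \<alpha> \<tau>) / \<alpha> \<tau>)) has_vector_derivative sqrt (\<alpha> b) * \<kappa>' \<tau>)
      (at \<tau> within {b..t})" if "\<tau> \<in> {b..t}" for \<tau>
    using alpha_range[OF that] alpha_deriv[OF that]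
    unfolding \<kappa>'_def has_real_derivative_iff_has_vector_derivative [symmetric]
    by (intro DERIV_cmult has_real_derivative_sqrt_noise_signal_ratio) auto
  from fundamental_theorem_of_calculus[OF \<open>b \<le> t\<close> this]
  have "((\<lambda>\<tau>. sqrt (\<alpha> b) * \<kappa>' \<tau>) has_integral
      sqrt (\<alpha> b) * sqrt ((1 - \<alpha> t) / \<alpha> t) - sqrt (\<alpha> b) * sqrt ((1 - \<alpha> b) / \<alpha> b)) {b..t}" .
  then have "((\<lambda>\<tau>. (sqrt (\<alpha> b) * \<kappa>' \<tau>) *\<^sub>R (mat 1 :: real^'n^'n)) has_integral
      (sqrt (\<alpha> b) * (sqrt ((1 - \<alpha> t) / \<alpha> t) - sqrt ((1 - \<alpha> b) / \<alpha> b))) *\<^sub>R mat 1) {b..t}"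
    by (intro has_integral_scaleR_left) (simp add: right_diff_distrib)
  then show ?thesis
    by (subst integral_cong[OF integrand]) (simp_all add: integral_unique)
qed

theorem proposition2:
  fixes T :: real
    and \<alpha> \<alpha>' :: "real \<Rightarrow> real"
    and \<Psi> :: "real \<Rightarrow> real \<Rightarrow> real^'n^'n"
    and \<epsilon> :: "real^'n \<Rightarrow> real \<Rightarrow> real^'n"
    and x :: "real^'n"
    and t \<Delta>t :: real
  assumes T_pos: "T > 0"
    and alpha_range: "\<And>s. s \<in> {0..T} \<Longrightarrow> 0 < \<alpha> s \<and> \<alpha> s < 1"
    and alpha_deriv: "\<And>s. s \<in> {0..T} \<Longrightarrow> (\<alpha> has_real_derivative \<alpha>' s) (at s within {0..T})"
    and alpha'_cont: "continuous_on {0..T} \<alpha>'"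
    and alpha_decr: "\<And>s u. s \<in> {0..T} \<Longrightarrow> u \<in> {0..T} \<Longrightarrow> s \<le> u \<Longrightarrow> \<alpha> u \<le> \<alpha> s"
    and Psi_diag: "\<And>s. s \<in> {0..T} \<Longrightarrow> \<Psi> s s = mat 1"
    and Psi_ode: "\<And>s u. s \<in> {0..T} \<Longrightarrow> u \<in> {0..T} \<Longrightarrow>
        ((\<lambda>r. \<Psi> r s) has_vector_derivative (vp_F \<alpha> \<alpha>' u ** \<Psi> u s)) (at u within {0..T})"
    and step: "0 \<le> t - \<Delta>t" "t - \<Delta>t < t" "t \<le> T"
  shows "\<Psi> (t - \<Delta>t) t *v x
          + (- integral {t - \<Delta>t..t}
                 (\<lambda>\<tau>. (1/2) *\<^sub>R (\<Psi> (t - \<Delta>t) \<tau> ** vp_G \<alpha> \<alpha>' \<tau> ** transpose (vp_G \<alpha> \<alpha>' \<tau>)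
                          ** matrix_inv (transpose (vp_L \<alpha> \<tau>))))) *v \<epsilon> x t
       = sqrt (\<alpha> (t - \<Delta>t) / \<alpha> t) *\<^sub>R x
          + (sqrt (1 - \<alpha> (t - \<Delta>t)) - sqrt (\<alpha> (t - \<Delta>t) / \<alpha> t) * sqrt (1 - \<alpha> t)) *\<^sub>R \<epsilon> x t"
proof -
  define b where "b = t - \<Delta>t"
  have b_in: "b \<in> {0..T}" and t_in: "t \<in> {0..T}" and "b \<le> t" and sub: "{b..t} \<subseteq> {0..T}"
    using step by (auto simp: b_def)
  have transition: "\<Psi> r s = sqrt (\<alpha> r / \<alpha> s) *\<^sub>R mat 1" if "r \<in> {0..T}" "s \<in> {0..T}" for r s
    by (rule vp_transition_matrix[where S = "{0..T}" and \<alpha>' = \<alpha>'])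
      (use alpha_range alpha_deriv Psi_diag Psi_ode that in auto)
  have alpha'_nonpos: "\<alpha>' \<tau> \<le> 0" if "\<tau> \<in> {0..T}" for \<tau>
    using alpha_decr T_pos that
    by (intro has_real_derivative_nonpos_if_antimono_on[OF _ alpha_deriv[OF that] that])
      (auto intro: monotone_onI simp: trivial_limit_within)
  have "integral {b..t} (\<lambda>\<tau>. (1/2) *\<^sub>R (\<Psi> b \<tau> ** vp_G \<alpha> \<alpha>' \<tau> ** transpose (vp_G \<alpha> \<alpha>' \<tau>)
            ** matrix_inv (transpose (vp_L \<alpha> \<tau>))))
    = (sqrt (\<alpha> b) * (sqrt ((1 - \<alpha> t) / \<alpha> t) - sqrt ((1 - \<alpha> b) / \<alpha> b))) *\<^sub>R mat 1"
    using \<open>b \<le> t\<close> sub alpha_range alpha'_nonpos transition b_in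
    by (intro vp_exponential_integrator_integral) (auto intro: DERIV_subset[OF alpha_deriv])
  moreover have "- (sqrt (\<alpha> b) * (sqrt ((1 - \<alpha> t) / \<alpha> t) - sqrt ((1 - \<alpha> b) / \<alpha> b)))
      = sqrt (1 - \<alpha> b) - sqrt (\<alpha> b / \<alpha> t) * sqrt (1 - \<alpha> t)"
    using alpha_range[OF b_in] alpha_range[OF t_in] by (simp add: real_sqrt_divide field_simps)
  ultimately show ?thesis
    unfolding b_def [symmetric]
    by (simp add: transition[OF b_in t_in] flip: scaleR_matrix_vector_assoc scaleR_minus_left)
qed

end
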